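(* Let $F,G\in\mathbb{A}$ and $\tilde H\in\mathbb{A}_q$ be as in the BQTRU key setting below, so that $\tilde H\equiv F^{-1}\circ G+\vartheta\pmod q$. Let $$\chi=\{\tau'\in\mathbb{A}: \exists F'\in\mathbb{A},\ \exists\alpha'\in\mathbb{A}\ \text{with}\ F\circ F'=F'\circ F\equiv 1+\alpha'\circ\tau'\!\!\pmod q\ \text{and}\ \tilde H\equiv F'\circ G+\tau'\!\!\pmod q\}.$$ Then for every $\tau'\in\chi$ with $\tau'\neq\vartheta$, $\|\overrightarrow{\rho(\tau')}\|_H>4|T|$.
   Context: Setting: $n$ prime, $p,q$ distinct primes with $\gcd(p,q)=\gcd(n,q)=1$ and $n\mid(q-1)$. $R'=\mathbb{Z}[x,y]/\langle x^n-1,y^n-1\rangle$, $R'_q=\mathbb{Z}_q[x,y]/\langle x^n-1,y^n-1\rangle$; $\mathbb{A},\mathbb{A}_q,\mathbb{L}_q$ are the quaternion algebras over $R'$, $R'_q$, $\mathbb{Z}_q$ (free module on $1,i,j,k$, scalars central, $i^2=j^2=1$, $i\circ j=-j\circ i=k$); "$\pmod q$" means equality after reducing coefficients mod $q$. $E=\{(a,b)\in\mathbb{Z}_q^2:a^n=b^n=1\}$, enumerated $(a_1,b_1),\dots,(a_{n^2},b_{n^2})$; $\lambda_{a,b}(x,y)=\frac{ab}{n^2}\cdot\frac{x^n-1}{x-a}\cdot\frac{y^n-1}{y-b}$ over $\mathbb{Z}_q$. For $F\in\mathbb{A}$ (reduced mod $q$) and $(a,b)\in E$, $F(a,b)\in\mathbb{L}_q$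 is componentwise evaluation, and $\overrightarrow{\rho(F)}\in\mathbb{Z}_q^{4n^2}$ is the vector $(\rho(f_0),\rho(f_1),\rho(f_2),\rho(f_3))$ with $\rho(f_t)=(f_t(a_1,b_1),\dots,f_t(a_{n^2},b_{n^2}))$; $\|\cdot\|_H$ is the Hamming weight (number of nonzero coordinates). Key setting: $G=g_0+g_1i+g_2j+g_3k$ and $F=f_0+f_1i+f_2j+f_3k$ with all $f_t,g_t$ ternary (coefficients in $\{-1,0,1\}$); $T=\bigcap_{t=0}^3\{(a,b)\in E: g_t(a,b)=0\}\ne\emptyset$, with the enumeration chosen so that $T=\{(a_1,b_1),\dots,(a_{|T|},b_{|T|})\}$; $\{(a,b)\in E: N(F)(a,b)=0\}\subseteq T$ where $N(F)=f_0^2-f_1^2-f_2^2-f_3^2$. $\sigma=\sum_{i=1}^{|T|}q_i\lambda_{a_i,b_i}$ with $q_i\in\mathbb{Z}_q$ nonzero; $Q=\langle q,\sigma\rangle\subseteq R'$, $J=Q+Qi+Qj+Qk$; $F^{-1}\in\mathbb{A}$ satisfies $F\circ F^{-1}=F^{-1}\circ F\equiv 1\pmod J$. $W=w_0+w_1i+w_2j+w_3k\in\mathbb{L}_q$ is invertible with $w_0,w_1,w_2,w_3\ne0$; $\vartheta=W\circ\sigma$, and $\tilde H\equiv F^{-1}\circ G+\vartheta\pmod q$. *)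

theory Defs
  imports "HOL-Number_Theory.Number_Theory"
begin

text \<open>Elements of R' = Z[x,y]/(x^n-1,y^n-1) are represented by their coefficient arrays
  f :: nat => nat => int, where f k l is the coefficient of x^k y^l; only indices k,l < n
  are meaningful (all operations below only read those).  Elements of R'_q are represented
  by integer representatives, with equality taken modulo q.\<close>

type_synonym rpoly = "nat \<Rightarrow> nat \<Rightarrow> int"

definition padd :: "rpoly \<Rightarrow> rpoly \<Rightarrow> rpoly" where
  "padd f g = (\<lambda>k l. f k l + g k l)"

definition psub :: "rpoly \<Rightarrow> rpoly \<Rightarrow> rpoly" where
  "psub f g = (\<lambda>k l. f k l - g k l)"

definition psmult :: "int \<Rightarrow> rpoly \<Rightarrow> rpoly" where
  "psmult c f = (\<lambda>k l. c * f k l)"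

text \<open>Multiplication in R' (cyclic convolution, since x^n = y^n = 1).\<close>
definition pmul :: "nat \<Rightarrow> rpoly \<Rightarrow> rpoly \<Rightarrow> rpoly" where
  "pmul n f g = (\<lambda>k l. \<Sum>i<n. \<Sum>j<n. f i j * g ((k + n - i) mod n) ((l + n - j) mod n))"

definition pconst :: "int \<Rightarrow> rpoly" where
  "pconst c = (\<lambda>k l. if k = 0 \<and> l = 0 then c else 0)"

definition peq_mod :: "nat \<Rightarrow> nat \<Rightarrow> rpoly \<Rightarrow> rpoly \<Rightarrow> bool" where
  "peq_mod n q f g \<longleftrightarrow> (\<forall>k<n. \<forall>l<n. [f k l = g k l] (mod int q))"

definition ternary :: "nat \<Rightarrow> rpoly \<Rightarrow> bool" where
  "ternary n f \<longleftrightarrow> (\<forall>k<n. \<forall>l<n. f k l \<in> {-1, 0, 1})"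

definition peval :: "nat \<Rightarrow> rpoly \<Rightarrow> int \<Rightarrow> int \<Rightarrow> int" where
  "peval n f a b = (\<Sum>k<n. \<Sum>l<n. f k l * a ^ k * b ^ l)"

datatype 'a quat = Quat 'a 'a 'a 'a

fun qc :: "'a quat \<Rightarrow> nat \<Rightarrow> 'a" where
  "qc (Quat a0 a1 a2 a3) t = (if t = 0 then a0 else if t = 1 then a1 else if t = 2 then a2 else a3)"

text \<open>Multiplication in the quaternion algebra over R' with i^2 = j^2 = 1, ij = -ji = k
  (hence k^2 = -1, ik = j, ki = -j, jk = -i, kj = i).\<close>
fun qmul :: "nat \<Rightarrow> rpoly quat \<Rightarrow> rpoly quat \<Rightarrow> rpoly quat" where
  "qmul n (Quat a0 a1 a2 a3) (Quat b0 b1 b2 b3) =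
     Quat (psub (padd (padd (pmul n a0 b0) (pmul n a1 b1)) (pmul n a2 b2)) (pmul n a3 b3))
          (psub (padd (padd (pmul n a0 b1) (pmul n a1 b0)) (pmul n a3 b2)) (pmul n a2 b3))
          (psub (padd (padd (pmul n a0 b2) (pmul n a2 b0)) (pmul n a1 b3)) (pmul n a3 b1))
          (psub (padd (padd (pmul n a0 b3) (pmul n a3 b0)) (pmul n a1 b2)) (pmul n a2 b1))"

fun qadd :: "rpoly quat \<Rightarrow> rpoly quat \<Rightarrow> rpoly quat" where
  "qadd (Quat a0 a1 a2 a3) (Quat b0 b1 b2 b3) = Quat (padd a0 b0) (padd a1 b1) (padd a2 b2) (padd a3 b3)"

definition qone :: "rpoly quat" where
  "qone = Quat (pconst 1) (pconst 0) (pconst 0) (pconst 0)"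

definition qscal :: "rpoly \<Rightarrow> rpoly quat" where
  "qscal s = Quat s (pconst 0) (pconst 0) (pconst 0)"

fun qconst :: "int quat \<Rightarrow> rpoly quat" where
  "qconst (Quat w0 w1 w2 w3) = Quat (pconst w0) (pconst w1) (pconst w2) (pconst w3)"

definition qeq_mod :: "nat \<Rightarrow> nat \<Rightarrow> rpoly quat \<Rightarrow> rpoly quat \<Rightarrow> bool" where
  "qeq_mod n q A B \<longleftrightarrow> (\<forall>t<4. peq_mod n q (qc A t) (qc B t))"

definition qternary :: "nat \<Rightarrow> rpoly quat \<Rightarrow> bool" where
  "qternary n A \<longleftrightarrow> (\<forall>t<4. ternary n (qc A t))"

fun lmul :: "int quat \<Rightarrow> int quat \<Rightarrow> int quat" where
  "lmul (Quat a0 a1 a2 a3) (Quat b0 b1 b2 b3) =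
     Quat (a0*b0 + a1*b1 + a2*b2 - a3*b3)
          (a0*b1 + a1*b0 + a3*b2 - a2*b3)
          (a0*b2 + a2*b0 + a1*b3 - a3*b1)
          (a0*b3 + a3*b0 + a1*b2 - a2*b1)"

definition leq_mod :: "nat \<Rightarrow> int quat \<Rightarrow> int quat \<Rightarrow> bool" where
  "leq_mod q A B \<longleftrightarrow> (\<forall>t<4. [qc A t = qc B t] (mod int q))"

definition linvertible :: "nat \<Rightarrow> int quat \<Rightarrow> bool" where
  "linvertible q W \<longleftrightarrow> (\<exists>V. leq_mod q (lmul W V) (Quat 1 0 0 0) \<and> leq_mod q (lmul V W) (Quat 1 0 0 0))"

definition Eset :: "nat \<Rightarrow> nat \<Rightarrow> (int \<times> int) set" where
  "Eset n q = {(a, b). a \<in> {0..<int q} \<and> b \<in> {0..<int q} \<and>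
                        [a ^ n = 1] (mod int q) \<and> [b ^ n = 1] (mod int q)}"

definition Tset :: "nat \<Rightarrow> nat \<Rightarrow> rpoly quat \<Rightarrow> (int \<times> int) set" where
  "Tset n q G = {(a, b) \<in> Eset n q. \<forall>t<4. [peval n (qc G t) a b = 0] (mod int q)}"

fun qnorm :: "nat \<Rightarrow> rpoly quat \<Rightarrow> rpoly" where
  "qnorm n (Quat f0 f1 f2 f3) =
     psub (psub (psub (pmul n f0 f0) (pmul n f1 f1)) (pmul n f2 f2)) (pmul n f3 f3)"

text \<open>lambda_{a,b} = (ab/n^2) ((x^n-1)/(x-a)) ((y^n-1)/(y-b)) over Z_q, using
  (x^n-1)/(x-a) = sum_{k<n} a^(n-1-k) x^k.  Coefficients reduced into {0..q-1}.\<close>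
definition lam :: "nat \<Rightarrow> nat \<Rightarrow> int \<Rightarrow> int \<Rightarrow> rpoly" where
  "lam n q a b = (\<lambda>k l. (a * b * (modular_inverse (int q) (int n))^2 * a ^ (n - 1 - k) * b ^ (n - 1 - l))
                         mod int q)"

text \<open>sigma = sum over (a_i,b_i) in T of q_i lambda_{a_i,b_i}; the coefficients q_i are given by c.\<close>
definition sigma :: "nat \<Rightarrow> nat \<Rightarrow> (int \<times> int) set \<Rightarrow> (int \<times> int \<Rightarrow> int) \<Rightarrow> rpoly" where
  "sigma n q T c = (\<lambda>k l. (\<Sum>(a, b)\<in>T. c (a, b) * lam n q a b k l) mod int q)"

text \<open>Membership in the ideal Q = <q, sigma> of R', and in J = Q + Qi + Qj + Qk.\<close>
definition inQ :: "nat \<Rightarrow> nat \<Rightarrow> rpoly \<Rightarrow> rpoly \<Rightarrow> bool" where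
  "inQ n q s f \<longleftrightarrow> (\<exists>r1 r2. \<forall>k<n. \<forall>l<n. f k l = int q * r1 k l + pmul n r2 s k l)"

definition qeq_modJ :: "nat \<Rightarrow> nat \<Rightarrow> rpoly \<Rightarrow> rpoly quat \<Rightarrow> rpoly quat \<Rightarrow> bool" where
  "qeq_modJ n q s A B \<longleftrightarrow> (\<forall>t<4. inQ n q s (psub (qc A t) (qc B t)))"

text \<open>Hamming weight of rho(F) in Z_q^{4 n^2}.\<close>
definition rho_weight :: "nat \<Rightarrow> nat \<Rightarrow> rpoly quat \<Rightarrow> nat" where
  "rho_weight n q A = card {(t, e). t < (4::nat) \<and> e \<in> Eset n q \<and>
                                    \<not> [peval n (qc A t) (fst e) (snd e) = 0] (mod int q)}"

end

theory Submission
  imports Defs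
begin

(* Evaluation at the points of E = {(a, b). a^n = b^n = 1} is a ring homomorphism from the
   quaternion algebra over R'_q to L_q, and it is injective on R'_q: since n divides q - 1 there is
   a primitive n-th root of unity w mod q, so evaluation on E is a two-dimensional discrete Fourier
   transform, inverted by the orthogonality relations for powers of w.
   At a point of T all components of G vanish, so the two decompositions of H~ force tau' and
   theta to take the same values there; as sigma is the Lagrange interpolant with value q_i at the
   i-th point of T, these values are w_t q_i, all nonzero, giving 4|T| nonzero coordinates.
   Since tau' and theta differ mod q, injectivity yields a further point where their values
   differ; it lies outside T, where sigma and hence theta vanish, so tau' is nonzero there too. *)

section \<open>Evaluation of polynomials at roots of unity\<close>

(* Declared so that calculations mixing = and congruence steps use these rules directly instead of
   higher-order substitution, which is prohibitively slow on the large sums below. *)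
lemma eq_cong_trans [trans]: "a = b \<Longrightarrow> [b = c] (mod m) \<Longrightarrow> [a = c] (mod m)"
  by simp

lemma cong_eq_trans [trans]: "[a = b] (mod m) \<Longrightarrow> b = c \<Longrightarrow> [a = c] (mod m)"
  by simp

lemma sum_swap_nested:
  "(\<Sum>k\<in>A. \<Sum>l\<in>B. \<Sum>i\<in>C. \<Sum>j\<in>D. h i j k l) = (\<Sum>i\<in>C. \<Sum>j\<in>D. \<Sum>k\<in>A. \<Sum>l\<in>B. h i j k l)"
proof -
  have "(\<Sum>k\<in>A. \<Sum>l\<in>B. \<Sum>i\<in>C. \<Sum>j\<in>D. h i j k l) = (\<Sum>k\<in>A. \<Sum>i\<in>C. \<Sum>l\<in>B. \<Sum>j\<in>D. h i j k l)"
    by (rule sum.cong[OF refl], rule sum.swap)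
  also have "\<dots> = (\<Sum>i\<in>C. \<Sum>k\<in>A. \<Sum>l\<in>B. \<Sum>j\<in>D. h i j k l)"
    by (rule sum.swap)
  also have "\<dots> = (\<Sum>i\<in>C. \<Sum>k\<in>A. \<Sum>j\<in>D. \<Sum>l\<in>B. h i j k l)"
    by (rule sum.cong[OF refl], rule sum.cong[OF refl], rule sum.swap)
  also have "\<dots> = (\<Sum>i\<in>C. \<Sum>j\<in>D. \<Sum>k\<in>A. \<Sum>l\<in>B. h i j k l)"
    by (rule sum.cong[OF refl], rule sum.swap)
  finally show ?thesis .
qed

lemma peval_padd: "peval n (padd f g) a b = peval n f a b + peval n g a b"
  unfolding peval_def padd_def by (simp add: sum.distrib algebra_simps)

lemma peval_psub: "peval n (psub f g) a b = peval n f a b - peval n g a b"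
  unfolding peval_def psub_def by (simp add: sum_subtractf algebra_simps)

lemma peval_pconst:
  assumes "n > 0"
  shows "peval n (pconst c) a b = c"
proof -
  have "peval n (pconst c) a b = (\<Sum>p\<in>{..<n} \<times> {..<n}. if p = (0, 0) then c else 0)"
    unfolding peval_def sum.cartesian_product
    by (rule sum.cong) (auto simp: pconst_def split: if_splits)
  also have "\<dots> = c"
    using assms by (subst sum.delta) auto
  finally show ?thesis .
qed

lemma peval_cong_coeffs:
  assumes "\<forall>k<n. \<forall>l<n. [f k l = g k l] (mod M)"
  shows "[peval n f a b = peval n g a b] (mod M)"
  unfolding peval_def using assms by (intro cong_sum cong_mult cong_refl) auto

lemma peval_cong_point:
  assumes "[a = a'] (mod M)" "[b = b'] (mod M)"
  shows "[peval n f a b = peval n f a' b'] (mod M)"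
  unfolding peval_def using assms by (intro cong_sum cong_mult cong_pow cong_refl)

lemma cyclic_shift_bij:
  fixes i n :: nat
  assumes "i < n"
  shows "bij_betw (\<lambda>k. (k + n - i) mod n) {..<n} {..<n}"
proof (rule bij_betw_byWitness[where f'="\<lambda>k. (k + i) mod n"])
  show "\<forall>k\<in>{..<n}. ((k + n - i) mod n + i) mod n = k"
  proof
    fix k assume "k \<in> {..<n}"
    have "((k + n - i) mod n + i) mod n = (k + n - i + i) mod n"
      by (simp only: mod_add_left_eq)
    also have "\<dots> = k" using assms \<open>k \<in> {..<n}\<close> by simp
    finally show "((k + n - i) mod n + i) mod n = k" .
  qed
  show "\<forall>k\<in>{..<n}. ((k + i) mod n + n - i) mod n = k"
  proof
    fix k assume "k \<in> {..<n}"
    have "((k + i) mod n + n - i) mod n = ((k + i) mod n + (n - i)) mod n"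
      using assms by (simp add: add_diff_assoc)
    also have "\<dots> = (k + i + (n - i)) mod n"
      by (simp only: mod_add_left_eq)
    also have "\<dots> = k" using assms \<open>k \<in> {..<n}\<close> by simp
    finally show "((k + i) mod n + n - i) mod n = k" .
  qed
qed auto

lemma cong_power_mod_exponent:
  fixes a :: int
  assumes "[a ^ n = 1] (mod M)"
  shows "[a ^ x = a ^ (x mod n)] (mod M)"
proof -
  have "a ^ x = (a ^ n) ^ (x div n) * a ^ (x mod n)"
    by (metis div_mult_mod_eq power_add power_mult mult.commute)
  also have "[\<dots> = 1 ^ (x div n) * a ^ (x mod n)] (mod M)"
    by (intro cong_mult cong_pow assms cong_refl)
  finally show ?thesis by simp
qed

lemma cong_power_cyclic_shift:
  fixes a :: int
  assumes "[a ^ n = 1] (mod M)" "i < n"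
  shows "[a ^ k = a ^ i * a ^ ((k + n - i) mod n)] (mod M)"
proof -
  have "(i + (k + n - i) mod n) mod n = k mod n"
    using assms(2) by (simp add: mod_add_right_eq)
  then have "[a ^ (i + (k + n - i) mod n) = a ^ k] (mod M)"
    using cong_power_mod_exponent[OF assms(1)] by (metis cong_sym cong_trans)
  then show ?thesis by (simp add: power_add cong_sym)
qed

lemma peval_cyclic_shift:
  fixes a b :: int
  assumes "[a ^ n = 1] (mod M)" "[b ^ n = 1] (mod M)" "i < n" "j < n"
  shows "[(\<Sum>k<n. \<Sum>l<n. g ((k + n - i) mod n) ((l + n - j) mod n) * a ^ k * b ^ l)
          = a ^ i * b ^ j * peval n g a b] (mod M)"
proof -
  define \<phi> where "\<phi> k = (k + n - i) mod n" for k
  define \<psi> where "\<psi> l = (l + n - j) mod n" for l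
  have "[(\<Sum>k<n. \<Sum>l<n. g (\<phi> k) (\<psi> l) * a ^ k * b ^ l)
       = (\<Sum>k<n. \<Sum>l<n. g (\<phi> k) (\<psi> l) * (a ^ i * a ^ \<phi> k) * (b ^ j * b ^ \<psi> l))] (mod M)"
    unfolding \<phi>_def \<psi>_def
    by (intro cong_sum cong_mult cong_refl cong_power_cyclic_shift assms)
  also have "(\<Sum>k<n. \<Sum>l<n. g (\<phi> k) (\<psi> l) * (a ^ i * a ^ \<phi> k) * (b ^ j * b ^ \<psi> l))
      = a ^ i * b ^ j * (\<Sum>k<n. \<Sum>l<n. g (\<phi> k) (\<psi> l) * a ^ \<phi> k * b ^ \<psi> l)"
    by (simp add: sum_distrib_left mult_ac)
  also have "(\<Sum>k<n. \<Sum>l<n. g (\<phi> k) (\<psi> l) * a ^ \<phi> k * b ^ \<psi> l) = peval n g a b"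
    unfolding peval_def
    using sum.reindex_bij_betw[OF cyclic_shift_bij[OF assms(3)],
        of "\<lambda>k. \<Sum>l<n. g k (\<psi> l) * a ^ k * b ^ \<psi> l"]
      sum.reindex_bij_betw[OF cyclic_shift_bij[OF assms(4)], of "\<lambda>l. g _ l * a ^ _ * b ^ l"]
    by (simp add: \<phi>_def \<psi>_def)
  finally show ?thesis unfolding \<phi>_def \<psi>_def .
qed

lemma peval_pmul:
  fixes a b :: int
  assumes "[a ^ n = 1] (mod M)" "[b ^ n = 1] (mod M)"
  shows "[peval n (pmul n f g) a b = peval n f a b * peval n g a b] (mod M)"
proof -
  have "peval n (pmul n f g) a b = (\<Sum>k<n. \<Sum>l<n. \<Sum>i<n. \<Sum>j<n.
          f i j * (g ((k + n - i) mod n) ((l + n - j) mod n) * a ^ k * b ^ l))"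
    unfolding peval_def pmul_def by (simp only: sum_distrib_right mult.assoc)
  also have "\<dots> = (\<Sum>i<n. \<Sum>j<n. f i j *
          (\<Sum>k<n. \<Sum>l<n. g ((k + n - i) mod n) ((l + n - j) mod n) * a ^ k * b ^ l))"
    unfolding sum_swap_nested[where h = "\<lambda>i j k l. f i j * _ i j k l"] by (simp only: sum_distrib_left)
  also have "[\<dots> = (\<Sum>i<n. \<Sum>j<n. f i j * (a ^ i * b ^ j * peval n g a b))] (mod M)"
    by (intro cong_sum cong_mult cong_refl peval_cyclic_shift assms) auto
  also have "(\<Sum>i<n. \<Sum>j<n. f i j * (a ^ i * b ^ j * peval n g a b)) = peval n f a b * peval n g a b"
    unfolding peval_def sum_distrib_right by (simp only: mult.assoc)
  finally show ?thesis .
qed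

section \<open>The Lagrange basis\<close>

lemma cong_geometric_sum_roots_of_unity:
  fixes a a' :: int
  assumes "prime q" "[a ^ n = 1] (mod int q)" "[a' ^ n = 1] (mod int q)"
  shows "[(\<Sum>k<n. a ^ (n - Suc k) * a' ^ k)
          = (if [a = a'] (mod int q) then int n * a ^ (n - 1) else 0)] (mod int q)"
proof (cases "[a = a'] (mod int q)")
  case True
  then have "[(\<Sum>k<n. a ^ (n - Suc k) * a' ^ k) = (\<Sum>k<n. a ^ (n - Suc k) * a ^ k)] (mod int q)"
    by (intro cong_sum cong_mult cong_pow cong_refl) (simp add: cong_sym)
  also have "(\<Sum>k<n. a ^ (n - Suc k) * a ^ k) = (\<Sum>k<n. a ^ (n - 1))"
    by (intro sum.cong refl) (auto simp flip: power_add)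
  finally show ?thesis using True by simp
next
  case False
  have "a' ^ n - a ^ n = (a' - a) * (\<Sum>k<n. a ^ (n - Suc k) * a' ^ k)"
    by (rule power_diff_sumr2)
  moreover have "[a' ^ n - a ^ n = 0] (mod int q)"
    using cong_diff[OF assms(3,2)] by simp
  moreover have "\<not> int q dvd a' - a"
    using False by (simp add: cong_iff_dvd_diff dvd_diff_commute)
  ultimately show ?thesis
    using False \<open>prime q\<close> by (simp add: cong_0_iff prime_dvd_mult_iff)
qed

lemma peval_lam_factors:
  "[peval n (lam n q a b) a' b' = a * b * modular_inverse (int q) (int n) ^ 2
      * (\<Sum>k<n. a ^ (n - Suc k) * a' ^ k) * (\<Sum>l<n. b ^ (n - Suc l) * b' ^ l)] (mod int q)"
proof -
  have "[peval n (lam n q a b) a' b' = (\<Sum>k<n. \<Sum>l<n. (a * b * modular_inverse (int q) (int n) ^ 2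
      * a ^ (n - 1 - k) * b ^ (n - 1 - l)) * a' ^ k * b' ^ l)] (mod int q)"
    unfolding peval_def lam_def by (intro cong_sum cong_mult cong_refl) (simp add: cong_def)
  then show ?thesis
    by (simp add: sum_distrib_left sum_distrib_right mult_ac)
qed

lemma peval_lam:
  assumes "prime q" "coprime n q" "n > 0" "(a, b) \<in> Eset n q" "(a', b') \<in> Eset n q"
  shows "[peval n (lam n q a b) a' b' = (if (a, b) = (a', b') then 1 else 0)] (mod int q)"
proof -
  define m where "m = modular_inverse (int q) (int n)"
  have E: "a \<in> {0..<int q}" "b \<in> {0..<int q}" "[a ^ n = 1] (mod int q)" "[b ^ n = 1] (mod int q)"
          "a' \<in> {0..<int q}" "b' \<in> {0..<int q}" "[a' ^ n = 1] (mod int q)" "[b' ^ n = 1] (mod int q)"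
    using assms(4,5) unfolding Eset_def by auto
  have cong_iff_eq: "[x = y] (mod int q) \<longleftrightarrow> x = y" if "x \<in> {0..<int q}" "y \<in> {0..<int q}" for x y
    using that cong_less_imp_eq_int by auto
  have "[peval n (lam n q a b) a' b' = a * b * m ^ 2
          * (if a = a' then int n * a ^ (n - 1) else 0) * (if b = b' then int n * b ^ (n - 1) else 0)]
        (mod int q)"
    using cong_geometric_sum_roots_of_unity[OF assms(1) E(3,7)]
      cong_geometric_sum_roots_of_unity[OF assms(1) E(4,8)]
    unfolding m_def cong_iff_eq[OF E(1,5)] cong_iff_eq[OF E(2,6)]
    by (intro cong_trans[OF peval_lam_factors] cong_mult cong_refl)
  moreover have "[a * b * m ^ 2 * (if a = a' then int n * a ^ (n - 1) else 0)
      * (if b = b' then int n * b ^ (n - 1) else 0) = (if (a, b) = (a', b') then 1 else 0)] (mod int q)"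
  proof (cases "(a, b) = (a', b')")
    case True
    have "[m * int n = 1] (mod int q)"
      unfolding m_def using assms(2)
      by (intro cong_modular_inverse2) (simp add: coprime_int_iff coprime_commute)
    have "Suc (n - 1) = n" using assms(3) by simp
    have "a * b * m ^ 2 * (int n * a ^ (n - 1)) * (int n * b ^ (n - 1))
        = (m * int n) ^ 2 * (a * a ^ (n - 1)) * (b * b ^ (n - 1))"
      by (simp only: power_mult_distrib power2_eq_square ac_simps)
    also have "\<dots> = (m * int n) ^ 2 * a ^ n * b ^ n"
      by (simp only: power_Suc[symmetric] \<open>Suc (n - 1) = n\<close>)
    also have "[\<dots> = 1 ^ 2 * 1 * 1] (mod int q)"
      by (intro cong_mult cong_pow E \<open>[m * int n = 1] (mod int q)\<close>)
    finally show ?thesis using True by simp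
  qed auto
  ultimately show ?thesis by (rule cong_trans)
qed

lemma finite_Eset: "finite (Eset n q)"
  by (rule finite_subset[of _ "{0..<int q} \<times> {0..<int q}"]) (auto simp: Eset_def)

lemma peval_sigma:
  assumes "prime q" "coprime n q" "n > 0" "T \<subseteq> Eset n q" "(a, b) \<in> Eset n q"
  shows "[peval n (sigma n q T c) a b = (if (a, b) \<in> T then c (a, b) else 0)] (mod int q)"
proof -
  have "finite T" using assms(4) finite_Eset finite_subset by blast
  have "[peval n (sigma n q T c) a b
        = (\<Sum>k<n. \<Sum>l<n. (\<Sum>e\<in>T. c e * lam n q (fst e) (snd e) k l) * a ^ k * b ^ l)] (mod int q)"
    unfolding peval_def sigma_def case_prod_unfold
    by (intro cong_sum cong_mult cong_refl) (simp add: cong_def)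
  also have "(\<Sum>k<n. \<Sum>l<n. (\<Sum>e\<in>T. c e * lam n q (fst e) (snd e) k l) * a ^ k * b ^ l)
      = (\<Sum>e\<in>T. c e * peval n (lam n q (fst e) (snd e)) a b)"
    unfolding peval_def sum_distrib_right sum_distrib_left
    by (subst sum.swap, subst (2) sum.swap) (simp add: mult_ac)
  also have "[(\<Sum>e\<in>T. c e * peval n (lam n q (fst e) (snd e)) a b)
      = (\<Sum>e\<in>T. c e * (if e = (a, b) then 1 else 0))] (mod int q)"
  proof (intro cong_sum cong_mult cong_refl)
    fix e assume "e \<in> T"
    then show "[peval n (lam n q (fst e) (snd e)) a b = (if e = (a, b) then 1 else 0)] (mod int q)"
      using peval_lam[OF assms(1-3) _ assms(5), of "fst e" "snd e"] assms(4) by auto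
  qed
  also have "(\<Sum>e\<in>T. c e * (if e = (a, b) then 1 else 0)) = (if (a, b) \<in> T then c (a, b) else 0)"
    using \<open>finite T\<close> by (simp add: if_distrib[of "\<lambda>x. c _ * x"] sum.delta cong: if_cong)
  finally show ?thesis .
qed

section \<open>Injectivity of evaluation\<close>

lemma exists_primitive_root_of_unity:
  assumes "prime q" "n dvd q - 1" "n > 0"
  obtains w :: int where "\<And>s. [w ^ s = 1] (mod int q) \<longleftrightarrow> n dvd s"
proof -
  obtain g where "residue_primroot q g"
    using prime_primitive_root_exists[OF prime_gt_1_nat[OF assms(1)] assms(1)] by blast
  then have ord_g: "ord q g = q - 1"
    using assms(1) by (simp add: residue_primroot_def totient_prime)
  define d where "d = (q - 1) div n"
  have q_minus_1: "q - 1 = n * d"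
    using assms(2) unfolding d_def by simp
  then have "d > 0"
    using prime_gt_1_nat[OF assms(1)] by (cases "d = 0") auto
  have "[(int g ^ d) ^ s = 1] (mod int q) \<longleftrightarrow> n dvd s" for s
  proof -
    have "[(int g ^ d) ^ s = 1] (mod int q) \<longleftrightarrow> [g ^ (d * s) = 1] (mod q)"
      by (metis cong_int_iff of_nat_1 of_nat_power power_mult)
    also have "\<dots> \<longleftrightarrow> n * d dvd d * s"
      using ord_divides[of g "d * s" q] ord_g q_minus_1 by simp
    also have "\<dots> \<longleftrightarrow> n dvd s"
      using \<open>d > 0\<close> by (simp add: mult.commute)
    finally show ?thesis .
  qed
  then show ?thesis using that by blast
qed

lemma cong_sum_powers_root_of_unity:
  fixes w :: int
  assumes "prime q" and w: "\<And>s. [w ^ s = 1] (mod int q) \<longleftrightarrow> n dvd s"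
  shows "[(\<Sum>u<n. (w ^ m) ^ u) = (if n dvd m then int n else 0)] (mod int q)"
proof (cases "n dvd m")
  case True
  then have "[(\<Sum>u<n. (w ^ m) ^ u) = (\<Sum>u<n. 1 ^ u)] (mod int q)"
    using w by (intro cong_sum cong_pow) auto
  then show ?thesis using True by simp
next
  case False
  have "(w ^ m) ^ n - 1 = (w ^ m - 1) * (\<Sum>u<n. (w ^ m) ^ u)"
    by (rule power_diff_1_eq)
  moreover have "[(w ^ m) ^ n = 1] (mod int q)"
    using w by (simp flip: power_mult)
  moreover have "\<not> int q dvd w ^ m - 1"
    using w False by (simp add: cong_iff_dvd_diff)
  ultimately show ?thesis
    using False \<open>prime q\<close> by (simp add: cong_iff_dvd_diff cong_0_iff prime_dvd_mult_iff)
qed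

lemma dvd_shifted_index_iff:
  fixes k k0 n :: nat
  assumes "k < n" "k0 < n"
  shows "n dvd k + (n - k0) \<longleftrightarrow> k = k0"
proof
  assume "n dvd k + (n - k0)"
  then obtain t where t: "k + (n - k0) = n * t" ..
  then have "0 < n * t" "n * t < n * 2"
    using assms by linarith+
  then have "0 < t" "t < 2"
    by simp_all
  then have "t = 1"
    by simp
  then show "k = k0"
    using t assms by simp
qed (use assms in simp)

(* The factor (w ^ s) ^ (n - k0) stands for w ^ (- s * k0). *)
lemma cong_dft_inversion:
  fixes w :: int
  assumes "prime q" and w: "\<And>s. [w ^ s = 1] (mod int q) \<longleftrightarrow> n dvd s"
    and "k0 < n" "l0 < n"
  shows "[(\<Sum>s<n. \<Sum>u<n. (w ^ s) ^ (n - k0) * (w ^ u) ^ (n - l0) * peval n f (w ^ s) (w ^ u))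
          = int n * int n * f k0 l0] (mod int q)"
proof -
  have pow: "(w ^ s) ^ (n - i) * (w ^ s) ^ k = (w ^ (k + (n - i))) ^ s" for s i k
    by (simp only: power_add[symmetric] power_mult[symmetric] mult.commute[of s]
        add.commute[of "n - i"] distrib_right[symmetric])
  have "(\<Sum>s<n. \<Sum>u<n. (w ^ s) ^ (n - k0) * (w ^ u) ^ (n - l0) * peval n f (w ^ s) (w ^ u))
      = (\<Sum>s<n. \<Sum>u<n. \<Sum>k<n. \<Sum>l<n. f k l * (w ^ (k + (n - k0))) ^ s * (w ^ (l + (n - l0))) ^ u)"
    unfolding peval_def sum_distrib_left pow[symmetric] by (simp only: ac_simps)
  also have "\<dots> = (\<Sum>k<n. \<Sum>l<n. f k l * ((\<Sum>s<n. (w ^ (k + (n - k0))) ^ s)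
                                         * (\<Sum>u<n. (w ^ (l + (n - l0))) ^ u)))"
    by (subst sum_swap_nested) (simp only: mult.assoc sum_product, simp only: sum_distrib_left)
  also have "[\<dots> = (\<Sum>k<n. \<Sum>l<n. f k l * ((if k = k0 then int n else 0)
                                         * (if l = l0 then int n else 0)))] (mod int q)"
  proof (intro cong_sum cong_mult cong_refl)
    fix k l assume "k \<in> {..<n}" "l \<in> {..<n}"
    then have "k < n" "l < n" by simp_all
    show "[(\<Sum>s<n. (w ^ (k + (n - k0))) ^ s) = (if k = k0 then int n else 0)] (mod int q)"
      using cong_sum_powers_root_of_unity[OF assms(1) w, of "k + (n - k0)"]
      unfolding dvd_shifted_index_iff[OF \<open>k < n\<close> assms(3)] .
    show "[(\<Sum>u<n. (w ^ (l + (n - l0))) ^ u) = (if l = l0 then int n else 0)] (mod int q)"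
      using cong_sum_powers_root_of_unity[OF assms(1) w, of "l + (n - l0)"]
      unfolding dvd_shifted_index_iff[OF \<open>l < n\<close> assms(4)] .
  qed
  also have "(\<Sum>k<n. \<Sum>l<n. f k l * ((if k = k0 then int n else 0) * (if l = l0 then int n else 0)))
      = int n * int n * f k0 l0"
    using assms(3,4)
    by (simp add: if_distrib[of "\<lambda>x. _ * x"] if_distrib[of "\<lambda>x. x * _"] sum.delta' cong: if_cong)
  finally show ?thesis .
qed

lemma peval_vanishing_imp_coeff_zero:
  assumes "prime q" "n > 0" "n dvd q - 1" "coprime n q"
    and vanish: "\<forall>(a, b)\<in>Eset n q. [peval n f a b = 0] (mod int q)"
    and "k0 < n" "l0 < n"
  shows "[f k0 l0 = 0] (mod int q)"
proof -
  obtain w :: int where w: "\<And>s. [w ^ s = 1] (mod int q) \<longleftrightarrow> n dvd s"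
    using exists_primitive_root_of_unity[OF assms(1,3,2)] by blast
  have vanish_w: "[peval n f (w ^ s) (w ^ u) = 0] (mod int q)" for s u
  proof -
    have "[(w ^ s mod int q) ^ n = 1] (mod int q)" for s
      using w[of "s * n"] by (simp add: cong_def power_mod power_mult)
    then have "(w ^ s mod int q, w ^ u mod int q) \<in> Eset n q"
      using prime_gt_0_nat[OF assms(1)] unfolding Eset_def by auto
    then have "[peval n f (w ^ s mod int q) (w ^ u mod int q) = 0] (mod int q)"
      using vanish by auto
    moreover have "[peval n f (w ^ s) (w ^ u) = peval n f (w ^ s mod int q) (w ^ u mod int q)] (mod int q)"
      by (intro peval_cong_point) (simp_all add: cong_def)
    ultimately show ?thesis by (rule cong_trans[rotated])
  qed
  have "[(\<Sum>s<n. \<Sum>u<n. (w ^ s) ^ (n - k0) * (w ^ u) ^ (n - l0) * peval n f (w ^ s) (w ^ u))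
        = (\<Sum>s<n. \<Sum>u<n. (w ^ s) ^ (n - k0) * (w ^ u) ^ (n - l0) * 0)] (mod int q)"
    by (intro cong_sum cong_mult cong_refl vanish_w)
  then have "[int n * int n * f k0 l0 = 0] (mod int q)"
    using cong_trans[OF cong_sym[OF cong_dft_inversion[OF assms(1) w assms(6,7), of f]]] by simp
  moreover have "\<not> q dvd n"
    using coprime_common_divisor[OF assms(4), of q] assms(1) by auto
  ultimately show ?thesis
    using assms(1) by (simp add: cong_0_iff prime_dvd_mult_iff)
qed

lemma exists_peval_not_cong:
  assumes "prime q" "n > 0" "n dvd q - 1" "coprime n q" "\<not> peq_mod n q f g"
  obtains a b where "(a, b) \<in> Eset n q" "\<not> [peval n f a b = peval n g a b] (mod int q)"
proof -
  have "\<exists>(a, b)\<in>Eset n q. \<not> [peval n (psub f g) a b = 0] (mod int q)"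
  proof (rule ccontr)
    assume "\<not> ?thesis"
    then have "[psub f g k l = 0] (mod int q)" if "k < n" "l < n" for k l
      using peval_vanishing_imp_coeff_zero[OF assms(1-4) _ that] by blast
    then have "peq_mod n q f g"
      unfolding peq_mod_def psub_def by (simp add: cong_iff_dvd_diff)
    then show False using assms(5) by simp
  qed
  then show ?thesis
    using that unfolding peval_psub by (auto simp: cong_iff_dvd_diff)
qed

section \<open>Evaluation of quaternions\<close>

definition qeval :: "nat \<Rightarrow> rpoly quat \<Rightarrow> int \<Rightarrow> int \<Rightarrow> int quat" where
  "qeval n A a b = map_quat (\<lambda>f. peval n f a b) A"

lemma qc_qeval: "qc (qeval n A a b) t = peval n (qc A t) a b"
  by (cases A) (simp add: qeval_def)

lemma qc_Quat_const: "qc (Quat x x x x) t = x"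
  by simp

lemma qc_qadd: "qc (qadd A B) t = padd (qc A t) (qc B t)"
  by (cases A; cases B) simp

lemma leq_mod_Quat_iff:
  "leq_mod q (Quat a0 a1 a2 a3) (Quat b0 b1 b2 b3) \<longleftrightarrow>
     [a0 = b0] (mod int q) \<and> [a1 = b1] (mod int q) \<and> [a2 = b2] (mod int q) \<and> [a3 = b3] (mod int q)"
  unfolding leq_mod_def by (auto simp: numeral_eq_Suc less_Suc_eq)

lemma leq_mod_refl: "leq_mod q A A"
  by (simp add: leq_mod_def)

lemma leq_mod_trans: "leq_mod q A B \<Longrightarrow> leq_mod q B C \<Longrightarrow> leq_mod q A C"
  unfolding leq_mod_def by (auto intro: cong_trans)

lemma leq_mod_lmul:
  assumes "leq_mod q A A'" "leq_mod q B B'"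
  shows "leq_mod q (lmul A B) (lmul A' B')"
  using assms by (cases A; cases A'; cases B; cases B')
    (auto simp: leq_mod_Quat_iff intro!: cong_add cong_diff cong_mult)

lemma qeq_mod_imp_leq_mod_qeval:
  assumes "qeq_mod n q A B"
  shows "leq_mod q (qeval n A a b) (qeval n B a b)"
  using assms unfolding qeq_mod_def peq_mod_def leq_mod_def qc_qeval
  by (auto intro: peval_cong_coeffs)

lemma qeval_qmul:
  assumes "[a ^ n = 1] (mod int q)" "[b ^ n = 1] (mod int q)"
  shows "leq_mod q (qeval n (qmul n A B) a b) (lmul (qeval n A a b) (qeval n B a b))"
  by (cases A; cases B)
    (simp add: qeval_def leq_mod_Quat_iff peval_padd peval_psub cong_add cong_diff peval_pmul assms)

lemma qeval_qconst: "n > 0 \<Longrightarrow> qeval n (qconst W) a b = W"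
  by (cases W) (simp add: qeval_def peval_pconst)

lemma qeval_qscal: "n > 0 \<Longrightarrow> qeval n (qscal s) a b = Quat (peval n s a b) 0 0 0"
  by (simp add: qscal_def qeval_def peval_pconst)

lemma peval_qmul_vanishes:
  assumes "[a ^ n = 1] (mod int q)" "[b ^ n = 1] (mod int q)"
    and "\<forall>t<4. [peval n (qc B t) a b = 0] (mod int q)" "t < 4"
  shows "[peval n (qc (qmul n A B) t) a b = 0] (mod int q)"
proof -
  have "leq_mod q (qeval n B a b) (Quat 0 0 0 0)"
    using assms(3) unfolding leq_mod_def qc_qeval qc_Quat_const .
  then have "leq_mod q (qeval n (qmul n A B) a b) (lmul (qeval n A a b) (Quat 0 0 0 0))"
    by (rule leq_mod_trans[OF qeval_qmul[OF assms(1,2)] leq_mod_lmul[OF leq_mod_refl]])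
  moreover have "lmul U (Quat 0 0 0 0) = Quat 0 0 0 0" for U
    by (cases U) simp
  ultimately have "leq_mod q (qeval n (qmul n A B) a b) (Quat 0 0 0 0)"
    by simp
  then show ?thesis
    using assms(4) unfolding leq_mod_def qc_qeval qc_Quat_const by blast
qed

lemma peval_qconst_qscal:
  assumes "[a ^ n = 1] (mod int q)" "[b ^ n = 1] (mod int q)" "n > 0" "t < 4"
  shows "[peval n (qc (qmul n (qconst W) (qscal s)) t) a b = qc W t * peval n s a b] (mod int q)"
proof -
  have "leq_mod q (qeval n (qmul n (qconst W) (qscal s)) a b) (lmul W (Quat (peval n s a b) 0 0 0))"
    using qeval_qmul[OF assms(1,2), of "qconst W" "qscal s"]
    unfolding qeval_qconst[OF assms(3)] qeval_qscal[OF assms(3)] .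
  then have "[peval n (qc (qmul n (qconst W) (qscal s)) t) a b
      = qc (lmul W (Quat (peval n s a b) 0 0 0)) t] (mod int q)"
    using assms(4) unfolding leq_mod_def qc_qeval by blast
  moreover have "qc (lmul W (Quat x 0 0 0)) t = qc W t * x" for x
    by (cases W) simp
  ultimately show ?thesis
    by simp
qed

lemma peval_agree_at_common_zero:
  assumes "qeq_mod n q H (qadd (qmul n X G) Y)" "qeq_mod n q H (qadd (qmul n X' G) Y')"
    and "[a ^ n = 1] (mod int q)" "[b ^ n = 1] (mod int q)"
    and "\<forall>t<4. [peval n (qc G t) a b = 0] (mod int q)" "t < 4"
  shows "[peval n (qc Y t) a b = peval n (qc Y' t) a b] (mod int q)"
proof -
  have "[peval n (qc H t) a b = 0 + peval n (qc Y t) a b] (mod int q)"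
    using qeq_mod_imp_leq_mod_qeval[OF assms(1)] assms(6)
      peval_qmul_vanishes[OF assms(3-5,6), of X]
    unfolding leq_mod_def qc_qeval qc_qadd peval_padd by (blast intro: cong_trans cong_add cong_refl)
  moreover have "[peval n (qc H t) a b = 0 + peval n (qc Y' t) a b] (mod int q)"
    using qeq_mod_imp_leq_mod_qeval[OF assms(2)] assms(6)
      peval_qmul_vanishes[OF assms(3-5,6), of X']
    unfolding leq_mod_def qc_qeval qc_qadd peval_padd by (blast intro: cong_trans cong_add cong_refl)
  ultimately show ?thesis
    by (simp add: cong_sym_eq) (meson cong_sym cong_trans)
qed

section \<open>The Hamming weight bound\<close>

definition vartheta ::
    "nat \<Rightarrow> nat \<Rightarrow> int quat \<Rightarrow> (int \<times> int) set \<Rightarrow> (int \<times> int \<Rightarrow> int) \<Rightarrow> rpoly quat"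
  where "vartheta n q W T c = qmul n (qconst W) (qscal (sigma n q T c))"

lemma peval_vartheta:
  assumes "prime q" "coprime n q" "n > 0" "T \<subseteq> Eset n q" "(a, b) \<in> Eset n q" "t < 4"
  shows "[peval n (qc (vartheta n q W T c) t) a b
          = qc W t * (if (a, b) \<in> T then c (a, b) else 0)] (mod int q)"
proof -
  have "[a ^ n = 1] (mod int q)" "[b ^ n = 1] (mod int q)"
    using assms(5) by (simp_all add: Eset_def)
  then show ?thesis
    using peval_sigma[OF assms(1-5), of c] unfolding vartheta_def
    by (intro cong_trans[OF peval_qconst_qscal] cong_mult cong_refl assms(3,6))
qed

lemma Tset_subset_Eset: "Tset n q G \<subseteq> Eset n q"
  unfolding Tset_def by auto

lemma peval_on_Tset:
  assumes "prime q" "coprime n q" "n > 0"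
    and "qeq_mod n q H (qadd (qmul n X G) Y)"
    and "qeq_mod n q H (qadd (qmul n X' G) (vartheta n q W (Tset n q G) c))"
    and "(a, b) \<in> Tset n q G" "t < 4"
  shows "[peval n (qc Y t) a b = qc W t * c (a, b)] (mod int q)"
proof -
  have "(a, b) \<in> Eset n q" and G_zero: "\<forall>t<4. [peval n (qc G t) a b = 0] (mod int q)"
    using assms(6) unfolding Tset_def by auto
  then have "[a ^ n = 1] (mod int q)" "[b ^ n = 1] (mod int q)"
    by (simp_all add: Eset_def)
  then have "[peval n (qc Y t) a b = peval n (qc (vartheta n q W (Tset n q G) c) t) a b] (mod int q)"
    using peval_agree_at_common_zero[OF assms(4,5) _ _ G_zero assms(7)] by blast
  also have "[peval n (qc (vartheta n q W (Tset n q G) c) t) a b = qc W t * c (a, b)] (mod int q)"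
    using peval_vartheta[OF assms(1-3) Tset_subset_Eset \<open>(a, b) \<in> Eset n q\<close> assms(7), of W G c]
      assms(6) by simp
  finally show ?thesis .
qed

lemma exists_nonzero_off_Tset:
  assumes "prime q" "coprime n q" "n > 0" "n dvd q - 1"
    and H_Y: "qeq_mod n q H (qadd (qmul n X G) Y)"
    and H_\<theta>: "qeq_mod n q H (qadd (qmul n X' G) (vartheta n q W (Tset n q G) c))"
    and "\<not> qeq_mod n q Y (vartheta n q W (Tset n q G) c)"
  obtains a b t where "(a, b) \<in> Eset n q - Tset n q G" "t < 4"
    "\<not> [peval n (qc Y t) a b = 0] (mod int q)"
proof -
  let ?\<theta> = "vartheta n q W (Tset n q G) c"
  obtain t where "t < 4" and "\<not> peq_mod n q (qc Y t) (qc ?\<theta> t)"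
    using assms(7) unfolding qeq_mod_def by blast
  then obtain a b where "(a, b) \<in> Eset n q"
    and ne: "\<not> [peval n (qc Y t) a b = peval n (qc ?\<theta> t) a b] (mod int q)"
    using exists_peval_not_cong[OF assms(1,3,4,2)] by blast
  moreover have "(a, b) \<notin> Tset n q G"
  proof
    assume "(a, b) \<in> Tset n q G"
    then show False
      using ne peval_on_Tset[OF assms(1-3) H_Y H_\<theta> _ \<open>t < 4\<close>]
        peval_on_Tset[OF assms(1-3) H_\<theta> H_\<theta> _ \<open>t < 4\<close>] by (meson cong_sym cong_trans)
  qed
  moreover have "[peval n (qc ?\<theta> t) a b = 0] (mod int q)"
    using peval_vartheta[OF assms(1-3) Tset_subset_Eset \<open>(a, b) \<in> Eset n q\<close> \<open>t < 4\<close>, of W G c]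
      \<open>(a, b) \<notin> Tset n q G\<close> by simp
  then have "\<not> [peval n (qc Y t) a b = 0] (mod int q)"
    using ne by (meson cong_sym cong_trans)
  ultimately show ?thesis
    using that \<open>t < 4\<close> by blast
qed

lemma rho_weight_gt:
  assumes "T \<subseteq> Eset n q"
    and "\<And>a b t. (a, b) \<in> T \<Longrightarrow> t < 4 \<Longrightarrow> \<not> [peval n (qc A t) a b = 0] (mod int q)"
    and "(a0, b0) \<in> Eset n q - T" "t0 < 4" "\<not> [peval n (qc A t0) a0 b0 = 0] (mod int q)"
  shows "4 * card T < rho_weight n q A"
proof -
  define S where "S = {(t, e). t < (4::nat) \<and> e \<in> Eset n q \<and>
                                \<not> [peval n (qc A t) (fst e) (snd e) = 0] (mod int q)}"
  have "finite S"
    by (rule finite_subset[of _ "{..<4} \<times> Eset n q"]) (auto simp: S_def finite_Eset)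
  moreover have "insert (t0, (a0, b0)) ({..<4} \<times> T) \<subseteq> S"
    using assms unfolding S_def by auto
  moreover have "card (insert (t0, (a0, b0)) ({..<4} \<times> T)) = Suc (4 * card T)"
    using assms(1,3) finite_subset[OF assms(1) finite_Eset] by (simp add: card_cartesian_product)
  ultimately have "Suc (4 * card T) \<le> card S"
    by (metis card_mono)
  then show ?thesis unfolding rho_weight_def S_def by simp
qed

theorem lemma7:
  fixes n p q :: nat
    and F G Finv Htil :: "rpoly quat"
    and W :: "int quat"
    and c :: "int \<times> int \<Rightarrow> int"
  assumes "prime n" and "prime p" and "prime q" and "p \<noteq> q"
    and "coprime p q" and "coprime n q" and "n dvd (q - 1)"
    and "qternary n F" and "qternary n G"
    and "Tset n q G \<noteq> {}"
    and "{(a, b) \<in> Eset n q. [peval n (qnorm n F) a b = 0] (mod int q)} \<subseteq> Tset n q G"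
    and "\<forall>e\<in>Tset n q G. \<not> [c e = 0] (mod int q)"
    and "qeq_modJ n q (sigma n q (Tset n q G) c) (qmul n F Finv) qone"
    and "qeq_modJ n q (sigma n q (Tset n q G) c) (qmul n Finv F) qone"
    and "linvertible q W"
    and "\<forall>t<4. \<not> [qc W t = 0] (mod int q)"
    and "qeq_mod n q Htil
           (qadd (qmul n Finv G) (qmul n (qconst W) (qscal (sigma n q (Tset n q G) c))))"
  shows "\<forall>\<tau>'. (\<exists>F' \<alpha>'. qeq_mod n q (qmul n F F') (qadd qone (qmul n \<alpha>' \<tau>'))
                    \<and> qeq_mod n q (qmul n F' F) (qadd qone (qmul n \<alpha>' \<tau>'))
                    \<and> qeq_mod n q Htil (qadd (qmul n F' G) \<tau>'))
               \<and> \<not> qeq_mod n q \<tau>' (qmul n (qconst W) (qscal (sigma n q (Tset n q G) c)))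
          \<longrightarrow> rho_weight n q \<tau>' > 4 * card (Tset n q G)"
proof (intro allI impI, elim conjE exE)
  fix \<tau>' F' \<alpha>' :: "rpoly quat"
  assume H_F': "qeq_mod n q Htil (qadd (qmul n F' G) \<tau>')"
    and ne: "\<not> qeq_mod n q \<tau>' (qmul n (qconst W) (qscal (sigma n q (Tset n q G) c)))"
  have "n > 0" using assms(1) prime_gt_0_nat by blast
  note H_Finv = assms(17)[folded vartheta_def]
  have "\<not> [peval n (qc \<tau>' t) a b = 0] (mod int q)" if "(a, b) \<in> Tset n q G" "t < 4" for a b t
  proof
    assume "[peval n (qc \<tau>' t) a b = 0] (mod int q)"
    then have "[qc W t * c (a, b) = 0] (mod int q)"
      using peval_on_Tset[OF assms(3,6) \<open>n > 0\<close> H_F' H_Finv that] by (meson cong_sym cong_trans)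
    then show False
      using assms(3,12,16) that by (auto simp: cong_0_iff prime_dvd_mult_iff)
  qed
  moreover obtain a b t where "(a, b) \<in> Eset n q - Tset n q G" "t < 4"
    "\<not> [peval n (qc \<tau>' t) a b = 0] (mod int q)"
    using exists_nonzero_off_Tset[OF assms(3,6) \<open>n > 0\<close> assms(7) H_F' H_Finv ne[folded vartheta_def]] .
  ultimately show "4 * card (Tset n q G) < rho_weight n q \<tau>'"
    using rho_weight_gt[OF Tset_subset_Eset] by blast
qed

end
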